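(* Let $\Re$ be a commutative ring with unit, let $n\ge 3$, and let $U_n$ be the cycle with vertices $v_1,\dots,v_n$ and edges $(v_i,v_{i+1})$, $i=1,\dots,n$ (indices taken modulo $n$, so $v_0=v_n$, $v_{n+1}=v_1$), equipped with a vertex-weight function $f_n:V(U_n)\to\Re$ and an edge-weight function $g_n:E(U_n)\to\Re$. Then for every fixed vertex $v_j$, \[ F(U_n; f_n, g_n; v_j)=\sum_{q=1}^{n}\Big(f_n(v_j)\prod_{k=0}^{q-2}g_n(v_k^1,v_k^2)f_n(v_k^2)\Big(1+\sum_{s=0}^{n-q-1}\prod_{k=0}^{s}g_n(v_k^3,v_k^4)f_n(v_k^4)\Big)\Big), \] where $v_k^1=v_{(j+k)\bmod n}$, $v_k^2=v_{(j+k+1)\bmod n}$, $v_k^3=v_{(n+j-k)\bmod n}$, $v_k^4=v_{(n+j-k-1)\bmod n}$ (with $v_0$ meaning $v_n$), and empty products equal $1$.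
   Context: For a graph $G$ with vertex weights $f$ and edge weights $g$ in $\Re$, a subtree is a nonempty subgraph of $G$ that is a tree (single vertices included). The weight of a subtree $T$ is $\omega(T)=\prod_{v\in V(T)}f(v)\prod_{e\in E(T)}g(e)$. For a vertex $v$, $F(G;f,g;v)=\sum \omega(T)$, the sum over all subtrees $T$ of $G$ containing $v$. *)

theory Defs
  imports Main
begin

definition edge_rel :: "'a set set \<Rightarrow> 'a \<Rightarrow> 'a \<Rightarrow> bool" where
  "edge_rel E u v \<longleftrightarrow> {u, v} \<in> E \<and> u \<noteq> v"

definition connected_graph :: "'a set \<Rightarrow> 'a set set \<Rightarrow> bool" where
  "connected_graph V E \<longleftrightarrow> (\<forall>u\<in>V. \<forall>v\<in>V. (edge_rel E)\<^sup>*\<^sup>* u v)"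

definition is_cycle :: "'a set set \<Rightarrow> 'a list \<Rightarrow> bool" where
  "is_cycle E cs \<longleftrightarrow> length cs \<ge> 3 \<and> distinct cs \<and>
     (\<forall>i < length cs. {cs ! i, cs ! ((i + 1) mod length cs)} \<in> E)"

definition acyclic_graph :: "'a set set \<Rightarrow> bool" where
  "acyclic_graph E \<longleftrightarrow> \<not> (\<exists>cs. is_cycle E cs)"

definition is_tree :: "'a set \<Rightarrow> 'a set set \<Rightarrow> bool" where
  "is_tree V E \<longleftrightarrow> V \<noteq> {} \<and> connected_graph V E \<and> acyclic_graph E"

definition subtrees :: "'a set \<Rightarrow> 'a set set \<Rightarrow> ('a set \<times> 'a set set) set" where
  "subtrees V E = {(VT, ET). VT \<subseteq> V \<and> ET \<subseteq> E \<and> (\<forall>e\<in>ET. e \<subseteq> VT) \<and> is_tree VT ET}"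

definition tree_weight :: "('a \<Rightarrow> 'r::comm_ring_1) \<Rightarrow> ('a set \<Rightarrow> 'r) \<Rightarrow> 'a set \<times> 'a set set \<Rightarrow> 'r" where
  "tree_weight f g T = (\<Prod>v\<in>fst T. f v) * (\<Prod>e\<in>snd T. g e)"

definition subtree_gen :: "'a set \<Rightarrow> 'a set set \<Rightarrow> ('a \<Rightarrow> 'r::comm_ring_1) \<Rightarrow> ('a set \<Rightarrow> 'r) \<Rightarrow> 'a \<Rightarrow> 'r" where
  "subtree_gen V E f g v = (\<Sum>T\<in>{T \<in> subtrees V E. v \<in> fst T}. tree_weight f g T)"

text \<open>The cycle U_n: vertices v_1..v_n represented by 1..n, edges {i, i+1} (indices mod n).\<close>
definition cyc_vertices :: "nat \<Rightarrow> nat set" where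
  "cyc_vertices n = {1..n}"

definition cyc_edges :: "nat \<Rightarrow> nat set set" where
  "cyc_edges n = (\<lambda>i. {i, i mod n + 1}) ` {1..n}"

definition cyc_idx :: "nat \<Rightarrow> nat \<Rightarrow> nat" where
  "cyc_idx n m = (if m mod n = 0 then n else m mod n)"

end

theory Submission
  imports Defs
begin

text \<open>A subtree of the cycle containing the root \<open>v\<^sub>j\<close> cannot use all \<open>n\<close> edges, so it is a
  path in the cycle cut open at a missing edge; being connected, it is an arc running \<open>a\<close> steps
  forward and \<open>b\<close> steps backward from \<open>v\<^sub>j\<close>, with \<open>a + b < n\<close>. Conversely every such arc is a
  subtree, different pairs \<open>(a, b)\<close> give different edge sets, and the weight of an arc factors
  as \<open>f(v\<^sub>j)\<close> times a forward and a backward product. Summing over \<open>b\<close> for fixed \<open>q = a + 1\<close>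
  gives the formula.\<close>

lemma prod_int_interval_split:
  fixes h :: "int \<Rightarrow> 'r::comm_monoid_mult"
  shows "(\<Prod>i\<in>{- int b..<int a}. h i) = (\<Prod>k<a. h (int k)) * (\<Prod>k<b. h (- int k - 1))"
proof (induction b)
  case 0
  show ?case
  proof (induction a)
    case (Suc a)
    have "{- int 0..<int (Suc a)} = insert (int a) {- int 0..<int a}" by auto
    then show ?case using Suc by (simp add: ac_simps)
  qed simp
next
  case (Suc b)
  have "{- int (Suc b)..<int a} = insert (- int b - 1) {- int b..<int a}" by auto
  then show ?case using Suc by (simp add: ac_simps)
qed

lemma rtranclp_edge_rel_sym: "(edge_rel E)\<^sup>*\<^sup>* x y \<Longrightarrow> (edge_rel E)\<^sup>*\<^sup>* y x"
  by (rule sympD[OF symp_rtranclp]) (auto simp: symp_def edge_rel_def insert_commute)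

lemma is_cycle_neighbours:
  assumes cyc: "is_cycle E cs" and x: "x \<in> set cs"
  obtains y z where "y \<in> set cs" "z \<in> set cs" "{x, y} \<in> E" "{x, z} \<in> E"
    "x \<noteq> y" "x \<noteq> z" "y \<noteq> z"
proof -
  define L where "L = length cs"
  have L3: "3 \<le> L" and dist: "distinct cs"
    and edge: "\<And>i. i < L \<Longrightarrow> {cs ! i, cs ! ((i + 1) mod L)} \<in> E"
    using cyc by (auto simp: is_cycle_def L_def)
  obtain i where i: "i < L" "x = cs ! i" using x by (auto simp: in_set_conv_nth L_def)
  define s t where "s = (i + 1) mod L" and "t = (i + L - 1) mod L"
  have "(t + 1) mod L = (i + L - 1 + 1) mod L"
    unfolding t_def by (rule mod_add_left_eq)
  then have t_succ: "(t + 1) mod L = i" using i L3 by simp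
  have "s \<noteq> i"
    using L3 i by (auto simp: s_def mod_Suc)
  moreover have "t \<noteq> i" using t_succ \<open>s \<noteq> i\<close> by (auto simp: s_def)
  moreover have "s \<noteq> t"
  proof
    assume "s = t"
    then have "(i + L - 1) mod L = (i + 1) mod L" by (simp add: s_def t_def)
    then have "L dvd (i + L - 1) - (i + 1)"
      using L3 by (subst mod_eq_dvd_iff_nat[symmetric]) auto
    moreover have "(i + L - 1) - (i + 1) = L - 2" using L3 by simp
    ultimately show False using L3 nat_dvd_not_less[of "L - 2" L] by simp
  qed
  moreover have "s < L" "t < L" using L3 by (auto simp: s_def t_def)
  moreover have "{x, cs ! s} \<in> E" "{x, cs ! t} \<in> E"
    using edge[of i] edge[of t] i t_succ \<open>t < L\<close> by (auto simp: s_def insert_commute)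
  ultimately show ?thesis
    using that[of "cs ! s" "cs ! t"] dist i by (auto simp: L_def nth_eq_iff_index_eq)
qed

definition path_edges :: "(int \<Rightarrow> 'a) \<Rightarrow> int set \<Rightarrow> 'a set set" where
  "path_edges p I = (\<lambda>i. {p i, p (i + 1)}) ` I"

lemma path_edges_neighbour:
  assumes inj: "inj_on p {lo..hi}" and i: "i \<in> {lo..hi}"
    and e: "{p i, y} \<in> path_edges p {lo..<hi}" and y: "y \<noteq> p i"
  shows "y = p (i + 1) \<or> (y = p (i - 1) \<and> lo \<le> i - 1)"
proof -
  obtain k where k: "k \<in> {lo..<hi}" "{p i, y} = {p k, p (k + 1)}"
    using e by (auto simp: path_edges_def)
  then consider "p i = p k" "y = p (k + 1)" | "p i = p (k + 1)" "y = p k"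
    by (auto simp: doubleton_eq_iff)
  then show ?thesis
  proof cases
    case 1
    then have "i = k" using inj i k(1) by (auto dest: inj_onD)
    then show ?thesis using 1 by simp
  next
    case 2
    then have "i = k + 1" using inj i k(1) by (auto dest: inj_onD)
    then show ?thesis using 2 k(1) by simp
  qed
qed

text \<open>On a cycle, the vertex with the least position along the path would need two distinct
  neighbours of larger position, but only its successor qualifies.\<close>
lemma acyclic_path_edges:
  assumes inj: "inj_on p {lo..hi}"
  shows "acyclic_graph (path_edges p {lo..<hi})"
  unfolding acyclic_graph_def
proof
  assume "\<exists>cs. is_cycle (path_edges p {lo..<hi}) cs"
  then obtain cs where cyc: "is_cycle (path_edges p {lo..<hi}) cs" by blast
  define I where "I = {i \<in> {lo..hi}. p i \<in> set cs}"
  have "set cs \<subseteq> p ` {lo..hi}"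
  proof
    fix x assume "x \<in> set cs"
    then obtain y where "{x, y} \<in> path_edges p {lo..<hi}"
      using is_cycle_neighbours[OF cyc] by metis
    then show "x \<in> p ` {lo..hi}" by (auto simp: path_edges_def doubleton_eq_iff)
  qed
  moreover obtain x where "x \<in> set cs" using cyc by (force simp: is_cycle_def)
  ultimately obtain i where "i \<in> {lo..hi}" "p i \<in> set cs" by blast
  then have "I \<noteq> {}" by (auto simp: I_def)
  have "finite I" unfolding I_def by (rule finite_subset[of _ "{lo..hi}"]) auto
  define i where "i = Min I"
  have i: "i \<in> {lo..hi}" "p i \<in> set cs" and i_min: "\<And>k. k \<in> I \<Longrightarrow> i \<le> k"
    using Min_in[OF \<open>finite I\<close> \<open>I \<noteq> {}\<close>] \<open>finite I\<close> by (auto simp: i_def I_def)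
  have succ: "y = p (i + 1)" if "y \<in> set cs" "{p i, y} \<in> path_edges p {lo..<hi}" "y \<noteq> p i" for y
    using path_edges_neighbour[OF inj i(1) that(2,3)] i_min[of "i - 1"] i(1) that(1)
    by (auto simp: I_def)
  obtain y z where "y \<in> set cs" "z \<in> set cs" "{p i, y} \<in> path_edges p {lo..<hi}"
    "{p i, z} \<in> path_edges p {lo..<hi}" "p i \<noteq> y" "p i \<noteq> z" "y \<noteq> z"
    using is_cycle_neighbours[OF cyc i(2)] by metis
  then show False using succ by metis
qed

lemma connected_path_edges: "connected_graph (p ` {lo..hi}) (path_edges p {lo..<hi})"
proof -
  let ?R = "edge_rel (path_edges p {lo..<hi})"
  have from_lo: "?R\<^sup>*\<^sup>* (p lo) (p (lo + int k))" if "lo + int k \<le> hi" for k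
    using that
  proof (induction k)
    case (Suc k)
    have "{p (lo + int k), p (lo + int k + 1)} \<in> path_edges p {lo..<hi}"
      using Suc.prems by (auto simp: path_edges_def)
    then have "?R\<^sup>*\<^sup>* (p (lo + int k)) (p (lo + int k + 1))"
      by (cases "p (lo + int k) = p (lo + int k + 1)") (auto simp: edge_rel_def)
    moreover have "?R\<^sup>*\<^sup>* (p lo) (p (lo + int k))" using Suc by simp
    moreover have "lo + int (Suc k) = lo + int k + 1" by simp
    ultimately show ?case by (metis rtranclp_trans)
  qed simp
  have reach: "?R\<^sup>*\<^sup>* (p lo) (p i)" if "i \<in> {lo..hi}" for i
    using that from_lo[of "nat (i - lo)"] by simp
  show ?thesis
    unfolding connected_graph_def
  proof (intro ballI)
    fix u v assume "u \<in> p ` {lo..hi}" "v \<in> p ` {lo..hi}"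
    then obtain i k where "i \<in> {lo..hi}" "k \<in> {lo..hi}" "u = p i" "v = p k" by blast
    then show "?R\<^sup>*\<^sup>* u v"
      using reach rtranclp_edge_rel_sym rtranclp_trans by metis
  qed
qed

lemma path_is_tree:
  assumes "lo \<le> hi" and "inj_on p {lo..hi}"
  shows "is_tree (p ` {lo..hi}) (path_edges p {lo..<hi})"
  using assms connected_path_edges acyclic_path_edges by (auto simp: is_tree_def)

lemma walk_crosses_path_edge:
  assumes inj: "inj_on p {w..m}" and ET: "ET \<subseteq> path_edges p {w..<m}"
    and walk: "(edge_rel ET)\<^sup>*\<^sup>* x y"
    and "inv_into {w..m} p x \<le> i" and "i < inv_into {w..m} p y"
  shows "{p i, p (i + 1)} \<in> ET"
  using walk assms(4,5)
proof (induction rule: rtranclp_induct)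
  case (step y z)
  let ?pos = "inv_into {w..m} p"
  obtain k where k: "k \<in> {w..<m}" "{y, z} = {p k, p (k + 1)}" and "y \<noteq> z" "{y, z} \<in> ET"
    using step.hyps(2) ET by (auto simp: edge_rel_def path_edges_def)
  have pos: "?pos (p k) = k" "?pos (p (k + 1)) = k + 1"
    using k(1) inv_into_f_f[OF inj] by auto
  from k(2) \<open>y \<noteq> z\<close> consider "y = p k" "z = p (k + 1)" | "y = p (k + 1)" "z = p k"
    by (auto simp: doubleton_eq_iff)
  then show ?case
  proof cases
    case 1
    show ?thesis
    proof (cases "i < k")
      case True then show ?thesis using step 1 pos by simp
    next
      case False
      then have "i = k" using step.prems(2) 1 pos by simp
      then show ?thesis using 1 \<open>{y, z} \<in> ET\<close> by simp
    qed
  next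
    case 2 then show ?thesis using step pos by simp
  qed
qed simp

lemma connected_subgraph_of_path:
  assumes inj: "inj_on p {w..m}"
    and VT: "VT \<subseteq> p ` {w..m}" "VT \<noteq> {}"
    and ET: "ET \<subseteq> path_edges p {w..<m}" "\<forall>e\<in>ET. e \<subseteq> VT"
    and conn: "connected_graph VT ET"
  obtains lo hi where "w \<le> lo" "lo \<le> hi" "hi \<le> m"
    "VT = p ` {lo..hi}" "ET = path_edges p {lo..<hi}"
proof -
  define P where "P = {i \<in> {w..m}. p i \<in> VT}"
  have VT_eq: "VT = p ` P" using VT(1) by (auto simp: P_def)
  have "finite P" unfolding P_def by (rule finite_subset[of _ "{w..m}"]) auto
  moreover have "P \<noteq> {}" using VT_eq VT(2) by blast
  ultimately have lo: "Min P \<in> P" and hi: "Max P \<in> P" and P_bounds: "P \<subseteq> {Min P..Max P}"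
    by auto
  define lo hi where "lo = Min P" and "hi = Max P"
  have lo_hi: "w \<le> lo" "lo \<le> hi" "hi \<le> m"
    using lo hi P_bounds by (auto simp: lo_def hi_def P_def)
  have path_in_ET: "{p i, p (i + 1)} \<in> ET" if "i \<in> {lo..<hi}" for i
  proof (rule walk_crosses_path_edge[OF inj ET(1)])
    show "(edge_rel ET)\<^sup>*\<^sup>* (p lo) (p hi)"
      using conn lo hi by (auto simp: connected_graph_def lo_def hi_def P_def)
    show "inv_into {w..m} p (p lo) \<le> i" "i < inv_into {w..m} p (p hi)"
      using that lo_hi inv_into_f_f[OF inj] by auto
  qed
  have "ET = path_edges p {lo..<hi}"
  proof
    show "ET \<subseteq> path_edges p {lo..<hi}"
    proof
      fix e assume e: "e \<in> ET"
      then obtain k where k: "k \<in> {w..<m}" "e = {p k, p (k + 1)}"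
        using ET(1) by (auto simp: path_edges_def)
      then have "k \<in> P" "k + 1 \<in> P" using ET(2) e by (auto simp: P_def)
      then show "e \<in> path_edges p {lo..<hi}"
        using P_bounds k(2) by (force simp: path_edges_def lo_def hi_def)
    qed
    show "path_edges p {lo..<hi} \<subseteq> ET" using path_in_ET by (auto simp: path_edges_def)
  qed
  moreover have "VT = p ` {lo..hi}"
  proof
    show "VT \<subseteq> p ` {lo..hi}" using VT_eq P_bounds by (auto simp: lo_def hi_def)
    show "p ` {lo..hi} \<subseteq> VT"
    proof
      fix v assume "v \<in> p ` {lo..hi}"
      then obtain i where i: "i \<in> {lo..hi}" "v = p i" by blast
      show "v \<in> VT"
      proof (cases "i = hi")
        case True then show ?thesis using hi i by (simp add: hi_def P_def)
      next
        case False then show ?thesis using path_in_ET[of i] ET(2) i by auto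
      qed
    qed
  qed
  ultimately show ?thesis using that lo_hi by blast
qed

locale rooted_cycle =
  fixes n j :: nat
  assumes three_le_n: "3 \<le> n" and root: "j \<in> {1..n}"
begin

text \<open>\<open>vertex_at i\<close> is the vertex reached from \<open>v\<^sub>j\<close> by \<open>i\<close> steps along the cycle (backwards for
  negative \<open>i\<close>); arcs around the root are images of integer intervals.\<close>
definition vertex_at :: "int \<Rightarrow> nat" where
  "vertex_at i = nat ((int j - 1 + i) mod int n) + 1"

definition forward_weight :: "(nat \<Rightarrow> 'r::comm_ring_1) \<Rightarrow> (nat set \<Rightarrow> 'r) \<Rightarrow> nat \<Rightarrow> 'r" where
  "forward_weight f g a =
     (\<Prod>k<a. g {vertex_at (int k), vertex_at (int k + 1)} * f (vertex_at (int k + 1)))"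

definition backward_weight :: "(nat \<Rightarrow> 'r::comm_ring_1) \<Rightarrow> (nat set \<Rightarrow> 'r) \<Rightarrow> nat \<Rightarrow> 'r" where
  "backward_weight f g b =
     (\<Prod>k<b. g {vertex_at (- int k), vertex_at (- int k - 1)} * f (vertex_at (- int k - 1)))"

lemma vertex_at_in: "vertex_at i \<in> {1..n}"
proof -
  have "nat ((int j - 1 + i) mod int n) < n" using three_le_n by (simp add: nat_less_iff)
  then show ?thesis by (simp add: vertex_at_def)
qed

lemma vertex_at_eq_iff: "vertex_at i = vertex_at k \<longleftrightarrow> i mod int n = k mod int n"
proof -
  have "vertex_at i = vertex_at k \<longleftrightarrow> (int j - 1 + i) mod int n = (int j - 1 + k) mod int n"
    using three_le_n by (simp add: vertex_at_def eq_nat_nat_iff)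
  also have "\<dots> \<longleftrightarrow> i mod int n = k mod int n" by (simp add: mod_eq_dvd_iff)
  finally show ?thesis .
qed

lemma vertex_at_0: "vertex_at 0 = j"
proof -
  have "(int j - 1) mod int n = int j - 1" using root by (intro mod_pos_pos_trivial) auto
  then show ?thesis using root by (simp add: vertex_at_def nat_diff_distrib')
qed

lemma vertex_at_add_n: "vertex_at (i + int n) = vertex_at i"
  by (simp add: vertex_at_eq_iff)

lemma vertex_at_succ: "vertex_at (i + 1) = vertex_at i mod n + 1"
proof -
  define x where "x = (int j - 1 + i) mod int n"
  have x: "0 \<le> x" "x < int n" using three_le_n by (auto simp: x_def)
  have "vertex_at (i + 1) = nat ((x + 1) mod int n) + 1"
    by (simp add: vertex_at_def x_def mod_simps add.assoc)
  moreover have "vertex_at i = nat x + 1" by (simp add: vertex_at_def x_def)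
  moreover have "nat ((x + 1) mod int n) = (nat x + 1) mod n"
    using x by (simp add: nat_mod_distrib nat_add_distrib)
  ultimately show ?thesis by simp
qed

lemma cyc_idx_eq_vertex_at:
  assumes "1 \<le> m"
  shows "cyc_idx n m = vertex_at (int m - int j)"
proof -
  obtain k where k: "m = Suc k" using assms by (cases m) auto
  have "vertex_at (int m - int j) = k mod n + 1"
    by (simp add: vertex_at_def k flip: of_nat_mod)
  moreover have "cyc_idx n (Suc k) = k mod n + 1"
    using three_le_n by (auto simp: cyc_idx_def mod_Suc)
  ultimately show ?thesis by (simp add: k)
qed

lemma inj_on_vertex_at: "hi < lo + int n \<Longrightarrow> inj_on vertex_at {lo..hi}"
proof (rule inj_onI)
  fix x y assume "hi < lo + int n" "x \<in> {lo..hi}" "y \<in> {lo..hi}" "vertex_at x = vertex_at y"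
  then have "int n dvd x - y" "\<bar>x - y\<bar> < int n"
    by (auto simp: vertex_at_eq_iff mod_eq_dvd_iff)
  then show "x = y" using dvd_imp_le_int[of "x - y" "int n"] by fastforce
qed

lemma vertex_at_period: "vertex_at ` {c..c + int n - 1} = {1..n}"
proof (rule card_subset_eq)
  show "vertex_at ` {c..c + int n - 1} \<subseteq> {1..n}" using vertex_at_in by blast
  have "inj_on vertex_at {c..c + int n - 1}" by (rule inj_on_vertex_at) simp
  then show "card (vertex_at ` {c..c + int n - 1}) = card {1..n}"
    by (simp add: card_image)
qed simp

lemma cyc_edges_eq_path_edges: "cyc_edges n = path_edges vertex_at {c..<c + int n}"
proof -
  have "{c..<c + int n} = {c..c + int n - 1}" by auto
  then have "path_edges vertex_at {c..<c + int n} =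
      (\<lambda>v. {v, v mod n + 1}) ` vertex_at ` {c..c + int n - 1}"
    by (simp add: path_edges_def image_image vertex_at_succ)
  then show ?thesis by (simp add: vertex_at_period cyc_edges_def)
qed

lemma inj_on_vertex_at_edge:
  assumes "hi < lo + int n"
  shows "inj_on (\<lambda>i. {vertex_at i, vertex_at (i + 1)}) {lo..hi}"
proof (rule inj_onI)
  fix x y assume xy: "x \<in> {lo..hi}" "y \<in> {lo..hi}"
    and eq: "{vertex_at x, vertex_at (x + 1)} = {vertex_at y, vertex_at (y + 1)}"
  have "\<not> (int n dvd x - (y + 1) \<and> int n dvd (x + 1) - y)"
  proof
    assume "int n dvd x - (y + 1) \<and> int n dvd (x + 1) - y"
    then have "int n dvd ((x + 1) - y) - (x - (y + 1))" using dvd_diff by blast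
    then show False using three_le_n zdvd_imp_le[of "int n" 2] by simp
  qed
  then have "vertex_at x = vertex_at y"
    using eq by (auto simp: doubleton_eq_iff vertex_at_eq_iff mod_eq_dvd_iff)
  then show "x = y" using inj_on_vertex_at[OF assms] xy by (auto dest: inj_onD)
qed

lemma path_edge_in_window:
  assumes "hi < lo + int n" "k \<in> {lo..hi}" "S \<subseteq> {lo..hi}"
  shows "{vertex_at k, vertex_at (k + 1)} \<in> path_edges vertex_at S \<longleftrightarrow> k \<in> S"
  using inj_on_image_mem_iff[OF inj_on_vertex_at_edge[OF assms(1)] assms(2,3)]
  by (simp add: path_edges_def)

lemma full_cycle_not_acyclic:
  assumes "path_edges vertex_at {0..<int n} \<subseteq> E"
  shows "\<not> acyclic_graph E"
proof -
  define cs where "cs = map (\<lambda>k. vertex_at (int k)) [0..<n]"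
  have "inj_on (\<lambda>k. vertex_at (int k)) {0..<n}"
    by (rule inj_onI) (simp add: vertex_at_eq_iff)
  then have "distinct cs" by (simp add: cs_def distinct_map)
  moreover have "{cs ! i, cs ! ((i + 1) mod n)} \<in> E" if "i < n" for i
  proof -
    have "vertex_at (int ((i + 1) mod n)) = vertex_at (int i + 1)"
      by (simp add: vertex_at_eq_iff zmod_int add.commute)
    then have "{cs ! i, cs ! ((i + 1) mod n)} = {vertex_at (int i), vertex_at (int i + 1)}"
      using that three_le_n by (simp add: cs_def)
    then show ?thesis using assms that by (force simp: path_edges_def)
  qed
  ultimately have "is_cycle E cs" using three_le_n by (simp add: is_cycle_def cs_def)
  then show ?thesis by (auto simp: acyclic_graph_def)
qed

definition arc :: "nat \<Rightarrow> nat \<Rightarrow> nat set \<times> nat set set" where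
  "arc a b = (vertex_at ` {- int b..int a}, path_edges vertex_at {- int b..<int a})"

lemma arc_rooted_subtree:
  assumes "a + b < n"
  shows "arc a b \<in> subtrees (cyc_vertices n) (cyc_edges n)" and "j \<in> fst (arc a b)"
proof -
  have inj: "inj_on vertex_at {- int b..int a}" using assms by (intro inj_on_vertex_at) simp
  have "path_edges vertex_at {- int b..<int a} \<subseteq>
      path_edges vertex_at {- int b..<- int b + int n}"
    using assms by (auto simp: path_edges_def)
  then have "path_edges vertex_at {- int b..<int a} \<subseteq> cyc_edges n"
    by (simp add: cyc_edges_eq_path_edges[of "- int b"])
  moreover have "vertex_at ` {- int b..int a} \<subseteq> cyc_vertices n"
    using vertex_at_in by (auto simp: cyc_vertices_def)
  moreover have "\<forall>e\<in>path_edges vertex_at {- int b..<int a}. e \<subseteq> vertex_at ` {- int b..int a}"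
    by (auto simp: path_edges_def)
  ultimately show "arc a b \<in> subtrees (cyc_vertices n) (cyc_edges n)"
    using path_is_tree[OF _ inj] by (simp add: subtrees_def arc_def)
  show "j \<in> fst (arc a b)"
    using vertex_at_0 by (force simp: arc_def)
qed

lemma rooted_subtree_is_arc:
  assumes T: "(VT, ET) \<in> subtrees (cyc_vertices n) (cyc_edges n)" and "j \<in> VT"
  obtains a b where "a + b < n" "(VT, ET) = arc a b"
proof -
  have VT: "VT \<subseteq> {1..n}" and ET: "ET \<subseteq> cyc_edges n" "\<forall>e\<in>ET. e \<subseteq> VT"
    and conn: "connected_graph VT ET" and "acyclic_graph ET"
    using T by (auto simp: subtrees_def is_tree_def cyc_vertices_def)
  then have "\<not> path_edges vertex_at {0..<int n} \<subseteq> ET" using full_cycle_not_acyclic by blast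
  then obtain m where m: "m \<in> {0..<int n}" "{vertex_at m, vertex_at (m + 1)} \<notin> ET"
    unfolding path_edges_def image_subset_iff by blast
  define w where "w = m + 1 - int n"
  have "cyc_edges n = path_edges vertex_at {w..<w + int n}" by (rule cyc_edges_eq_path_edges)
  also have "{w..<w + int n} = insert m {w..<m}" using m(1) by (auto simp: w_def)
  finally have ET_path: "ET \<subseteq> path_edges vertex_at {w..<m}"
    using ET(1) m(2) by (auto simp: path_edges_def)
  have inj: "inj_on vertex_at {w..m}" by (rule inj_on_vertex_at) (simp add: w_def)
  have VT_path: "VT \<subseteq> vertex_at ` {w..m}" using VT vertex_at_period[of w] by (simp add: w_def)
  have "VT \<noteq> {}" using \<open>j \<in> VT\<close> by blast
  obtain lo hi where lo_hi: "w \<le> lo" "lo \<le> hi" "hi \<le> m"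
    and VT_eq: "VT = vertex_at ` {lo..hi}" and ET_eq: "ET = path_edges vertex_at {lo..<hi}"
    by (rule connected_subgraph_of_path[OF inj VT_path \<open>VT \<noteq> {}\<close> ET_path ET(2) conn])
  obtain i where i: "i \<in> {lo..hi}" "vertex_at i = vertex_at 0"
    using \<open>j \<in> VT\<close> unfolding VT_eq by (auto simp: vertex_at_0)
  have "i = 0" using inj_onD[OF inj i(2)] i(1) lo_hi m(1) by (auto simp: w_def)
  then have "lo \<le> 0" "0 \<le> hi" using i(1) by auto
  show ?thesis
  proof
    show "nat hi + nat (- lo) < n"
      using lo_hi m(1) \<open>lo \<le> 0\<close> \<open>0 \<le> hi\<close> by (simp add: w_def)
    show "(VT, ET) = arc (nat hi) (nat (- lo))"
      using \<open>lo \<le> 0\<close> \<open>0 \<le> hi\<close> by (simp add: arc_def VT_eq ET_eq)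
  qed
qed

lemma arc_edges_subset_le:
  assumes "a' + b' < n" and sub: "snd (arc a b) \<subseteq> snd (arc a' b')"
  shows "a \<le> a'" and "b \<le> b'"
proof -
  have in_arc: "k \<in> {- int b'..<int a'}"
    if "{vertex_at k, vertex_at (k + 1)} \<in> path_edges vertex_at {- int b..<int a}"
      "k \<in> {lo..hi}" "{- int b'..<int a'} \<subseteq> {lo..hi}" "hi < lo + int n" for k lo hi
    using that sub path_edge_in_window[of hi lo k "{- int b'..<int a'}"] by (auto simp: arc_def)
  show "a \<le> a'"
  proof (rule ccontr)
    assume "\<not> a \<le> a'"
    then have "{vertex_at (int a'), vertex_at (int a' + 1)} \<in> path_edges vertex_at {- int b..<int a}"
      by (auto simp: path_edges_def)
    then have "int a' \<in> {- int b'..<int a'}"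
      by (rule in_arc[of _ "- int b'" "int a'"]) (use assms(1) in auto)
    then show False by simp
  qed
  show "b \<le> b'"
  proof (rule ccontr)
    assume "\<not> b \<le> b'"
    then have "{vertex_at (- int b' - 1), vertex_at (- int b' - 1 + 1)} \<in>
        path_edges vertex_at {- int b..<int a}"
      by (auto simp: path_edges_def)
    then have "- int b' - 1 \<in> {- int b'..<int a'}"
      by (rule in_arc[of _ "- int b' - 1" "int a' - 1"]) (use assms(1) in auto)
    then show False by simp
  qed
qed

lemma inj_on_arc: "inj_on (\<lambda>(a, b). arc a b) {(a, b). a + b < n}"
proof (rule inj_onI, clarify)
  fix a b a' b' assume "a + b < n" "a' + b' < n" "arc a b = arc a' b'"
  then show "a = a' \<and> b = b'"
    using arc_edges_subset_le[of a' b' a b] arc_edges_subset_le[of a b a' b'] by auto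
qed

lemma rooted_subtrees_eq_arcs:
  "{T \<in> subtrees (cyc_vertices n) (cyc_edges n). j \<in> fst T} = (\<lambda>(a, b). arc a b) ` {(a, b). a + b < n}"
  (is "?rooted = ?arcs")
proof
  show "?rooted \<subseteq> ?arcs"
  proof clarify
    fix VT ET assume "(VT, ET) \<in> subtrees (cyc_vertices n) (cyc_edges n)" "j \<in> fst (VT, ET)"
    then obtain a b where "a + b < n" "(VT, ET) = arc a b"
      using rooted_subtree_is_arc by (metis fst_conv)
    then show "(VT, ET) \<in> ?arcs" by force
  qed
  show "?arcs \<subseteq> ?rooted" using arc_rooted_subtree by auto
qed

lemma tree_weight_arc:
  assumes "a + b < n"
  shows "tree_weight f g (arc a b) = f j * forward_weight f g a * backward_weight f g b"
proof -
  let ?e = "\<lambda>i. {vertex_at i, vertex_at (i + 1)}"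
  have inj_v: "inj_on vertex_at {- int b..int a}" using assms by (intro inj_on_vertex_at) simp
  have "inj_on ?e {- int b..int a}" using assms by (intro inj_on_vertex_at_edge) simp
  then have inj_e: "inj_on ?e {- int b..<int a}" by (rule inj_on_subset) auto
  have "tree_weight f g (arc a b) =
      (\<Prod>i\<in>{- int b..int a}. f (vertex_at i)) * (\<Prod>i\<in>{- int b..<int a}. g (?e i))"
    by (simp add: tree_weight_def arc_def path_edges_def prod.reindex[OF inj_v]
        prod.reindex[OF inj_e])
  also have "{- int b..int a} = {- int b..<int (Suc a)}" by auto
  also have "(\<Prod>i\<in>{- int b..<int (Suc a)}. f (vertex_at i)) * (\<Prod>i\<in>{- int b..<int a}. g (?e i)) =
      ((\<Prod>k<Suc a. f (vertex_at (int k))) * (\<Prod>k<b. f (vertex_at (- int k - 1)))) *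
      ((\<Prod>k<a. g (?e (int k))) * (\<Prod>k<b. g (?e (- int k - 1))))"
    by (simp only: prod_int_interval_split)
  also have "\<dots> = f j * forward_weight f g a * backward_weight f g b"
    unfolding prod.lessThan_Suc_shift
    by (simp add: forward_weight_def backward_weight_def prod.distrib
        vertex_at_0 insert_commute ac_simps)
  finally show ?thesis .
qed

lemma subtree_gen_eq_arc_sum:
  "subtree_gen (cyc_vertices n) (cyc_edges n) f g j =
     (\<Sum>a<n. f j * forward_weight f g a * (\<Sum>b<n - a. backward_weight f g b))"
proof -
  have "subtree_gen (cyc_vertices n) (cyc_edges n) f g j =
      (\<Sum>(a, b)\<in>{(a, b). a + b < n}. tree_weight f g (arc a b))"
    unfolding subtree_gen_def rooted_subtrees_eq_arcs
    by (rule sum.reindex_cong[OF inj_on_arc refl]) auto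
  also have "\<dots> = (\<Sum>(a, b)\<in>{(a, b). a + b < n}. f j * forward_weight f g a * backward_weight f g b)"
    by (rule sum.cong) (auto simp: tree_weight_arc)
  also have "{(a, b). a + b < n} = Sigma {..<n} (\<lambda>a. {..<n - a})" by auto
  also have "(\<Sum>(a, b)\<in>Sigma {..<n} (\<lambda>a. {..<n - a}).
        f j * forward_weight f g a * backward_weight f g b) =
      (\<Sum>a<n. \<Sum>b<n - a. f j * forward_weight f g a * backward_weight f g b)"
    by (rule sum.Sigma[symmetric]) auto
  finally show ?thesis by (simp add: sum_distrib_left)
qed

lemma forward_weight_cyc_idx:
  "forward_weight f g a =
     (\<Prod>k\<in>{0..<a}. g {cyc_idx n (j + k), cyc_idx n (j + k + 1)} * f (cyc_idx n (j + k + 1)))"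
  using root by (auto simp: forward_weight_def atLeast0LessThan cyc_idx_eq_vertex_at add.commute
      intro!: prod.cong)

lemma cyc_idx_backward:
  assumes "k < n"
  shows "cyc_idx n (n + j - k) = vertex_at (- int k)"
    and "cyc_idx n (n + j - k - 1) = vertex_at (- int k - 1)"
proof -
  have "cyc_idx n (n + j - k) = vertex_at (int (n + j - k) - int j)"
    using assms root by (intro cyc_idx_eq_vertex_at) auto
  also have "int (n + j - k) - int j = - int k + int n" using assms by auto
  finally show "cyc_idx n (n + j - k) = vertex_at (- int k)" by (simp only: vertex_at_add_n)
  have "cyc_idx n (n + j - k - 1) = vertex_at (int (n + j - k - 1) - int j)"
    using assms root by (intro cyc_idx_eq_vertex_at) auto
  also have "int (n + j - k - 1) - int j = - int k - 1 + int n" using assms root by auto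
  finally show "cyc_idx n (n + j - k - 1) = vertex_at (- int k - 1)" by (simp only: vertex_at_add_n)
qed

lemma backward_weight_Suc_cyc_idx:
  assumes "s < n"
  shows "backward_weight f g (Suc s) = (\<Prod>k = 0..s.
    g {cyc_idx n (n + j - k), cyc_idx n (n + j - k - 1)} * f (cyc_idx n (n + j - k - 1)))"
proof -
  have "(\<Prod>k = 0..s.
      g {cyc_idx n (n + j - k), cyc_idx n (n + j - k - 1)} * f (cyc_idx n (n + j - k - 1))) =
      (\<Prod>k = 0..s. g {vertex_at (- int k), vertex_at (- int k - 1)} * f (vertex_at (- int k - 1)))"
  proof (rule prod.cong[OF refl])
    fix k assume "k \<in> {0..s}"
    then have "k < n" using assms by auto
    then show "g {cyc_idx n (n + j - k), cyc_idx n (n + j - k - 1)} * f (cyc_idx n (n + j - k - 1)) =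
        g {vertex_at (- int k), vertex_at (- int k - 1)} * f (vertex_at (- int k - 1))"
      by (simp only: cyc_idx_backward)
  qed
  then show ?thesis by (simp add: backward_weight_def atLeast0AtMost lessThan_Suc_atMost)
qed

lemma sum_backward_weight_cyc_idx:
  assumes "a < n"
  shows "(\<Sum>b<n - a. backward_weight f g b) =
    1 + (\<Sum>s\<in>{0..<n - Suc a}. \<Prod>k = 0..s.
          g {cyc_idx n (n + j - k), cyc_idx n (n + j - k - 1)} * f (cyc_idx n (n + j - k - 1)))"
proof -
  have "n - a = Suc (n - Suc a)" using assms by simp
  then have "(\<Sum>b<n - a. backward_weight f g b) =
      backward_weight f g 0 + (\<Sum>s<n - Suc a. backward_weight f g (Suc s))"
    by (simp only: sum.lessThan_Suc_shift)
  also have "backward_weight f g 0 = 1" by (simp add: backward_weight_def)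
  also have "(\<Sum>s<n - Suc a. backward_weight f g (Suc s)) = (\<Sum>s\<in>{0..<n - Suc a}. \<Prod>k = 0..s.
      g {cyc_idx n (n + j - k), cyc_idx n (n + j - k - 1)} * f (cyc_idx n (n + j - k - 1)))"
    unfolding atLeast0LessThan by (rule sum.cong[OF refl backward_weight_Suc_cyc_idx]) auto
  finally show ?thesis .
qed

end

theorem theorem2:
  fixes n j :: nat and f :: "nat \<Rightarrow> 'r::comm_ring_1" and g :: "nat set \<Rightarrow> 'r"
  assumes "n \<ge> 3" and "j \<in> {1..n}"
  shows "subtree_gen (cyc_vertices n) (cyc_edges n) f g j =
    (\<Sum>q = 1..n. f j *
       (\<Prod>k\<in>{0..<q - 1}. g {cyc_idx n (j + k), cyc_idx n (j + k + 1)} * f (cyc_idx n (j + k + 1))) *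
       (1 + (\<Sum>s\<in>{0..<n - q}. \<Prod>k = 0..s.
              g {cyc_idx n (n + j - k), cyc_idx n (n + j - k - 1)} * f (cyc_idx n (n + j - k - 1)))))"
proof -
  interpret rooted_cycle n j using assms by unfold_locales
  show ?thesis
    unfolding subtree_gen_eq_arc_sum sum.atLeast1_atMost_eq[unfolded One_nat_def[symmetric]]
    by (intro sum.cong refl) (simp add: forward_weight_cyc_idx sum_backward_weight_cyc_idx)
qed

end
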